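(* Let $L:\mathbb{R}^d\times\mathbb{R}^{d+1}\to\mathbb{R}$ be such that $L(w,z)$ is convex in $w$, let $\nabla_1L(w,z)$ be a sub-gradient of $L(\cdot,z)$ at $w$, and assume there are constants $A,B\ge0$ with $\|\nabla_1 L(w,z)\|^2\le A L(w,z)+B$ for all $w\in\mathbb{R}^d$, $z\in\mathbb{R}^{d+1}$. Let $\eta>0$, $g\ge0$, $\theta\in[0,\infty]$, $w\in\mathbb{R}^d$, $z\in\mathbb{R}^{d+1}$, and let \[ w'=T_1\big(w-\eta\nabla_1L(w,z),\ g\eta,\ \theta\big). \] Then for all $\bar w\in\mathbb{R}^d$, \[ (1-0.5A\eta)L(w,z)+g\|w'\cdot I(|w'|\le\theta)\|_1\le L(\bar w,z)+g\|\bar w\cdot I(|w'|\le\theta)\|_1+\frac{\eta}{2}B+\frac{\|\bar w-w\|^2-\|\bar w-w'\|^2}{2\eta}. \]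
   Context: $\|\cdot\|$ is the Euclidean norm and $\|\cdot\|_1$ the $1$-norm. $T_1(v,\alpha,\theta)$ is applied coordinatewise: $T_1(v_j,\alpha,\theta)=\max(0,v_j-\alpha)$ if $v_j\in[0,\theta]$, $=\min(0,v_j+\alpha)$ if $v_j\in[-\theta,0]$, and $=v_j$ otherwise. For $v,v'\in\mathbb{R}^d$, $\|v\cdot I(|v'|\le\theta)\|_1=\sum_{j=1}^d|v_j|\,I(|v'_j|\le\theta)$ with $I$ the indicator function. *)

theory Defs
  imports "HOL-Analysis.Analysis"
begin

definition T1 :: "real \<Rightarrow> real \<Rightarrow> ereal \<Rightarrow> real" where
  "T1 v \<alpha> \<theta> =
     (if 0 \<le> v \<and> ereal v \<le> \<theta> then max 0 (v - \<alpha>)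
      else if v \<le> 0 \<and> ereal (- v) \<le> \<theta> then min 0 (v + \<alpha>)
      else v)"

definition T1_vec :: "real^'d \<Rightarrow> real \<Rightarrow> ereal \<Rightarrow> real^'d" where
  "T1_vec v \<alpha> \<theta> = (\<chi> j. T1 (v $ j) \<alpha> \<theta>)"

definition masked_l1 :: "real^'d \<Rightarrow> real^'d \<Rightarrow> ereal \<Rightarrow> real" where
  "masked_l1 v v' \<theta> = (\<Sum>j\<in>UNIV. \<bar>v $ j\<bar> * of_bool (ereal \<bar>v' $ j\<bar> \<le> \<theta>))"

end

theory Submission
  imports Defs
begin

text \<open>The update is a proximal gradient step: inside the band \<open>|v| \<le> \<theta>\<close> the map \<open>T1\<close> is the
  soft threshold, the proximal map of \<open>\<alpha>|\<cdot>|\<close>, and outside it is the identity while the mask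
  vanishes. The prox optimality condition \<open>(u - w')\<bullet>(v - w') \<le> g\<eta>(R v - R w')\<close> for the masked
  penalty \<open>R\<close>, the subgradient inequality at \<open>w\<close> and the growth bound on the subgradient then
  combine through the three-point identity for \<open>\<parallel>v - w\<parallel>\<^sup>2 - \<parallel>v - w'\<parallel>\<^sup>2\<close>.\<close>

lemma soft_threshold_pos_variational_inequality:
  fixes u b \<alpha> :: real
  assumes "0 \<le> \<alpha>" "0 \<le> u"
  shows "(u - max 0 (u - \<alpha>)) * (b - max 0 (u - \<alpha>)) \<le> \<alpha> * (\<bar>b\<bar> - \<bar>max 0 (u - \<alpha>)\<bar>)"
proof (cases "u \<le> \<alpha>")
  case True
  have "u * b \<le> u * \<bar>b\<bar>" using assms by (simp add: mult_left_mono)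
  also have "\<dots> \<le> \<alpha> * \<bar>b\<bar>" using True by (simp add: mult_right_mono)
  finally show ?thesis using True by simp
next
  case False
  then show ?thesis using assms by (simp add: mult_left_mono)
qed

lemma soft_threshold_variational_inequality:
  fixes u b \<alpha> :: real
  assumes "0 \<le> \<alpha>"
  defines "s \<equiv> if 0 \<le> u then max 0 (u - \<alpha>) else min 0 (u + \<alpha>)"
  shows "(u - s) * (b - s) \<le> \<alpha> * (\<bar>b\<bar> - \<bar>s\<bar>)"
proof (cases "0 \<le> u")
  case True
  then show ?thesis
    using soft_threshold_pos_variational_inequality[OF assms(1) True] by (simp add: s_def)
next
  case False
  have "min 0 (u + \<alpha>) = - max 0 (- u - \<alpha>)" by linarith
  then show ?thesis
    using False soft_threshold_pos_variational_inequality[OF assms(1), of "- u" "- b"]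
    by (simp add: s_def algebra_simps)
qed

lemma abs_T1_le: "0 \<le> \<alpha> \<Longrightarrow> \<bar>T1 u \<alpha> \<theta>\<bar> \<le> \<bar>u\<bar>"
  by (auto simp: T1_def)

lemma T1_variational_inequality:
  fixes u b \<alpha> :: real and \<theta> :: ereal
  assumes "0 \<le> \<alpha>"
  shows "(u - T1 u \<alpha> \<theta>) * (b - T1 u \<alpha> \<theta>)
         \<le> \<alpha> * ((\<bar>b\<bar> - \<bar>T1 u \<alpha> \<theta>\<bar>) * of_bool (ereal \<bar>T1 u \<alpha> \<theta>\<bar> \<le> \<theta>))"
proof (cases "ereal \<bar>u\<bar> \<le> \<theta>")
  case True
  have "ereal \<bar>T1 u \<alpha> \<theta>\<bar> \<le> \<theta>"
    using True abs_T1_le[OF assms] order_trans ereal_less_eq(3) by blast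
  moreover have "T1 u \<alpha> \<theta> = (if 0 \<le> u then max 0 (u - \<alpha>) else min 0 (u + \<alpha>))"
    using True by (auto simp: T1_def)
  ultimately show ?thesis
    using soft_threshold_variational_inequality[OF assms, of u b] by simp
next
  case False
  then have "T1 u \<alpha> \<theta> = u" by (auto simp: T1_def)
  then show ?thesis using False by simp
qed

lemma T1_vec_variational_inequality:
  fixes u v :: "real^'d" and \<alpha> :: real and \<theta> :: ereal
  assumes "0 \<le> \<alpha>"
  defines "c \<equiv> T1_vec u \<alpha> \<theta>"
  shows "(u - c) \<bullet> (v - c) \<le> \<alpha> * (masked_l1 v c \<theta> - masked_l1 c c \<theta>)"
proof -
  have "(u - c) \<bullet> (v - c) = (\<Sum>j\<in>UNIV. (u$j - T1 (u$j) \<alpha> \<theta>) * (v$j - T1 (u$j) \<alpha> \<theta>))"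
    by (simp add: inner_vec_def c_def T1_vec_def)
  also have "\<dots> \<le> (\<Sum>j\<in>UNIV. \<alpha> * ((\<bar>v$j\<bar> - \<bar>T1 (u$j) \<alpha> \<theta>\<bar>) * of_bool (ereal \<bar>T1 (u$j) \<alpha> \<theta>\<bar> \<le> \<theta>)))"
    by (intro sum_mono T1_variational_inequality assms)
  also have "\<dots> = \<alpha> * (masked_l1 v c \<theta> - masked_l1 c c \<theta>)"
    unfolding masked_l1_def c_def T1_vec_def vec_lambda_beta
    by (simp only: sum_distrib_left sum_subtractf right_diff_distrib left_diff_distrib)
  finally show ?thesis .
qed

lemma norm_add_power2:
  fixes x y :: "'a::real_inner"
  shows "(norm (x + y))\<^sup>2 = (norm x)\<^sup>2 + 2 * (x \<bullet> y) + (norm y)\<^sup>2"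
  using dot_norm[of x y] by simp

lemma three_point_identity:
  fixes v w c G :: "'a::real_inner"
  shows "(norm (v - w))\<^sup>2 - (norm (v - c))\<^sup>2
         = (norm (w - \<eta> *\<^sub>R G - c))\<^sup>2 - 2 * ((w - \<eta> *\<^sub>R G - c) \<bullet> (v - c))
           - 2 * \<eta> * (G \<bullet> (v - w)) - \<eta>\<^sup>2 * (norm G)\<^sup>2"
proof -
  let ?u = "w - \<eta> *\<^sub>R G"
  have "(norm (v - ?u))\<^sup>2 = (norm (v - c))\<^sup>2 + 2 * ((v - c) \<bullet> (c - ?u)) + (norm (c - ?u))\<^sup>2"
    using norm_add_power2[of "v - c" "c - ?u"] by (simp only: diff_add_cancel add_diff_eq)
  moreover have "(norm (v - ?u))\<^sup>2 = (norm (v - w))\<^sup>2 + 2 * \<eta> * (G \<bullet> (v - w)) + \<eta>\<^sup>2 * (norm G)\<^sup>2"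
    using norm_add_power2[of "v - w" "\<eta> *\<^sub>R G"]
    by (simp add: inner_commute power_mult_distrib diff_diff_eq2 diff_add_eq mult.assoc)
  moreover have "(v - c) \<bullet> (c - ?u) = - ((?u - c) \<bullet> (v - c))"
    by (simp add: inner_diff_left inner_diff_right inner_commute)
  moreover have "norm (c - ?u) = norm (?u - c)" by (rule norm_minus_commute)
  ultimately show ?thesis by simp
qed

lemma proximal_gradient_step_bound:
  fixes v w c G :: "'a::real_inner" and \<eta> A B Lw Lv Rv Rc :: real
  assumes prox: "(w - \<eta> *\<^sub>R G - c) \<bullet> (v - c) \<le> \<eta> * (Rv - Rc)"
    and subgrad: "Lw + G \<bullet> (v - w) \<le> Lv"
    and growth: "(norm G)\<^sup>2 \<le> A * Lw + B"
    and eta: "0 < \<eta>"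
  shows "(1 - 0.5 * A * \<eta>) * Lw + Rc
         \<le> Lv + Rv + \<eta> / 2 * B + ((norm (v - w))\<^sup>2 - (norm (v - c))\<^sup>2) / (2 * \<eta>)"
proof -
  define gap where "gap = (norm (v - w))\<^sup>2 - (norm (v - c))\<^sup>2"
  have "\<eta>\<^sup>2 * (norm G)\<^sup>2 \<le> \<eta>\<^sup>2 * (A * Lw + B)"
    using growth by (simp add: mult_left_mono)
  moreover have "\<eta> * (G \<bullet> (v - w)) \<le> \<eta> * (Lv - Lw)"
    using subgrad eta by (simp add: mult_left_mono)
  ultimately have "- 2 * \<eta> * (Rv - Rc) - 2 * \<eta> * (Lv - Lw) - \<eta>\<^sup>2 * (A * Lw + B) \<le> gap"
    using three_point_identity[of v w c \<eta> G] prox zero_le_power2[of "norm (w - \<eta> *\<^sub>R G - c)"]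
    unfolding gap_def by linarith
  then have "(- 2 * \<eta> * (Rv - Rc) - 2 * \<eta> * (Lv - Lw) - \<eta>\<^sup>2 * (A * Lw + B)) / (2 * \<eta>)
      \<le> gap / (2 * \<eta>)"
    using eta by (simp add: divide_right_mono)
  moreover have "(- 2 * \<eta> * (Rv - Rc) - 2 * \<eta> * (Lv - Lw) - \<eta>\<^sup>2 * (A * Lw + B)) / (2 * \<eta>)
      = (1 - 0.5 * A * \<eta>) * Lw + Rc - Lv - Rv - \<eta> / 2 * B"
    using eta by (simp add: field_simps power2_eq_square)
  ultimately show ?thesis unfolding gap_def by linarith
qed

theorem lemma1:
  fixes L :: "real^'d \<Rightarrow> real^'e \<Rightarrow> real"
    and G :: "real^'d \<Rightarrow> real^'e \<Rightarrow> real^'d"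
    and A B \<eta> g :: real and \<theta> :: ereal
    and w wbar :: "real^'d" and z :: "real^'e"
  assumes dim_z: "CARD('e) = CARD('d) + 1"
    and conv: "\<And>z. convex_on UNIV (\<lambda>w. L w z)"
    and subgrad: "\<And>w z v. L v z \<ge> L w z + G w z \<bullet> (v - w)"
    and AB: "A \<ge> 0" "B \<ge> 0"
    and growth: "\<And>w z. (norm (G w z))\<^sup>2 \<le> A * L w z + B"
    and eta: "\<eta> > 0" and g: "g \<ge> 0" and theta: "\<theta> \<ge> 0"
  shows "(let w' = T1_vec (w - \<eta> *\<^sub>R G w z) (g * \<eta>) \<theta> in
           (1 - 0.5 * A * \<eta>) * L w z + g * masked_l1 w' w' \<theta>
           \<le> L wbar z + g * masked_l1 wbar w' \<theta> + \<eta> / 2 * B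
              + ((norm (wbar - w))\<^sup>2 - (norm (wbar - w'))\<^sup>2) / (2 * \<eta>))"
proof -
  define w' where "w' = T1_vec (w - \<eta> *\<^sub>R G w z) (g * \<eta>) \<theta>"
  have "(w - \<eta> *\<^sub>R G w z - w') \<bullet> (wbar - w')
        \<le> \<eta> * (g * masked_l1 wbar w' \<theta> - g * masked_l1 w' w' \<theta>)"
    using T1_vec_variational_inequality[where \<alpha> = "g * \<eta>" and u = "w - \<eta> *\<^sub>R G w z" and v = wbar] g eta
    by (simp add: w'_def algebra_simps)
  from proximal_gradient_step_bound[OF this subgrad growth eta]
  show ?thesis by (simp add: w'_def Let_def)
qed

end
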